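(* Let $A \subset \mathbb{Z}^d$ consist of exactly $d+2$ points, contain $0$, and generate $\mathbb{Z}^d$ additively. Denote the nonzero elements of $A$ by $v_0, v_1, \ldots, v_d$, where $v_1, \ldots, v_d$ are linearly independent. For integers $k$ let $C_k = \{\sum_{i=1}^d n_i v_i : n_i \in \mathbb{N}, \ \sum_{i=1}^d n_i \leq k\}$ (so $C_k = \emptyset$ for $k < 0$), and for integers $j, h \geq 0$ let $A_{j,h} = j v_0 + C_{h-j}$. Let $N$ be the order of $v_0$ in the finite group $\mathbb{Z}^d / \mathrm{span}_{\mathbb{Z}}\{v_1,\ldots,v_d\}$. Let $h \geq 0$ and let $I \subseteq \{0,1,\ldots,h\}$ be a nonempty set all of whose elements are congruent modulo $N$, with $m = \min I$ and $M = \max I$. Then \[ \bigcap_{j \in I} A_{j,h} = A_{m,h} \cap A_{M,h}. \]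
   Context: $\mathbb{N} = \{0,1,2,\ldots\}$; for a vector $x$ and set $S$, $x + S = \{x + s : s \in S\}$. *)

theory Defs
  imports "HOL-Analysis.Analysis"
begin

text \<open>Integer vectors in Z^d are modelled as int ^ 'd, with d = CARD('d).\<close>

definition zsc :: "int \<Rightarrow> int ^ 'd \<Rightarrow> int ^ 'd" where
  "zsc c x = (\<chi> i. c * x $ i)"

definition rvec :: "int ^ 'd \<Rightarrow> real ^ 'd" where
  "rvec x = (\<chi> i. real_of_int (x $ i))"

definition generates_Zd :: "(int ^ 'd) set \<Rightarrow> bool" where
  "generates_Zd A \<longleftrightarrow> (\<forall>z. \<exists>c. z = (\<Sum>a\<in>A. zsc (c a) a))"

definition Cset :: "(nat \<Rightarrow> int ^ 'd) \<Rightarrow> int \<Rightarrow> (int ^ 'd) set" where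
  "Cset v k = {(\<Sum>i\<in>{1..CARD('d)}. zsc (int (n i)) (v i)) | n :: nat \<Rightarrow> nat.
                 int (\<Sum>i\<in>{1..CARD('d)}. n i) \<le> k}"

definition Ajh :: "(nat \<Rightarrow> int ^ 'd) \<Rightarrow> nat \<Rightarrow> nat \<Rightarrow> (int ^ 'd) set" where
  "Ajh v j h = (\<lambda>x. zsc (int j) (v 0) + x) ` Cset v (int h - int j)"

definition lat :: "(nat \<Rightarrow> int ^ 'd) \<Rightarrow> (int ^ 'd) set" where
  "lat v = {(\<Sum>i\<in>{1..CARD('d)}. zsc (c i) (v i)) | c :: nat \<Rightarrow> int. True}"

definition ordN :: "(nat \<Rightarrow> int ^ 'd) \<Rightarrow> nat" where
  "ordN v = (LEAST N::nat. N > 0 \<and> zsc (int N) (v 0) \<in> lat v)"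

end

theory Submission imports Defs begin

(* If x = m v_0 + sum a_i v_i = M v_0 + sum b_i v_i lies in A_{m,h} and A_{M,h}, then (M - m) v_0
  lies in the lattice L = span_Z{v_1..v_d}, so N v_0 = sum c_i v_i for the order N of v_0 modulo L.
  For j = m + kN and M = j + lN, uniqueness of coordinates in the independent v_1..v_d gives
  a - b = (k + l) c, hence x = j v_0 + sum e_i v_i with e = a - k c = (l a + k b) / (k + l).
  As a convex combination of a and b, e is nonnegative and sum e <= h - j, i.e. x is in A_{j,h}.
  Of the hypotheses only the independence of v_1..v_d and injectivity of v are needed. *)

definition lincomb :: "(nat \<Rightarrow> int ^ 'd) \<Rightarrow> (nat \<Rightarrow> int) \<Rightarrow> int ^ 'd" where
  "lincomb v c = (\<Sum>i\<in>{1..CARD('d)}. zsc (c i) (v i))"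

lemma lat_eq_range_lincomb: "lat v = range (lincomb v)"
  unfolding lat_def lincomb_def by auto

lemma lincomb_diff: "lincomb v (\<lambda>i. a i - b i) = lincomb v a - lincomb v b"
  by (simp add: lincomb_def zsc_def vec_eq_iff sum_subtractf left_diff_distrib)

lemma lincomb_scale: "lincomb v (\<lambda>i. t * c i) = zsc t (lincomb v c)"
  by (simp add: lincomb_def zsc_def vec_eq_iff sum_distrib_left mult.assoc)

lemma zsc_diff: "zsc (a - b) x = zsc a x - zsc b x"
  by (simp add: zsc_def vec_eq_iff left_diff_distrib)

lemma zsc_add: "zsc (a + b) x = zsc a x + zsc b x"
  by (simp add: zsc_def vec_eq_iff distrib_right)

lemma zsc_zsc: "zsc a (zsc b x) = zsc (a * b) x"
  by (simp add: zsc_def vec_eq_iff)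

lemma rvec_lincomb:
  fixes v :: "nat \<Rightarrow> int ^ 'd"
  shows "rvec (lincomb v c) = (\<Sum>i\<in>{1..CARD('d)}. of_int (c i) *\<^sub>R rvec (v i))"
  by (simp add: rvec_def lincomb_def zsc_def vec_eq_iff)

lemma independent_image_coeff_eq_0:
  fixes f :: "'i \<Rightarrow> 'a::real_vector"
  assumes indep: "independent (f ` K)" and inj: "inj_on f K" and "finite K"
    and sum0: "(\<Sum>i\<in>K. c i *\<^sub>R f i) = 0" and "i \<in> K"
  shows "c i = 0"
proof -
  define u where "u y = c (the_inv_into K f y)" for y
  have "(\<Sum>y\<in>f ` K. u y *\<^sub>R y) = (\<Sum>i\<in>K. c i *\<^sub>R f i)"
    by (simp add: sum.reindex[OF inj] u_def the_inv_into_f_f[OF inj])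
  then have "u (f i) = 0"
    using real_vector.independentD[OF indep _ subset_refl] sum0 assms by simp
  then show ?thesis
    by (simp add: u_def the_inv_into_f_f[OF inj \<open>i \<in> K\<close>])
qed

lemma lincomb_coeffs_unique:
  fixes v :: "nat \<Rightarrow> int ^ 'd"
  assumes indep: "independent (rvec ` v ` {1..CARD('d)})" and inj: "inj_on v {1..CARD('d)}"
    and eq: "lincomb v a = lincomb v b" and i: "i \<in> {1..CARD('d)}"
  shows "a i = b i"
proof -
  have "inj rvec"
    by (rule injI) (simp add: rvec_def vec_eq_iff)
  then have inj': "inj_on (rvec \<circ> v) {1..CARD('d)}"
    using inj by (metis comp_inj_on inj_on_subset subset_UNIV)
  have "(\<Sum>i\<in>{1..CARD('d)}. of_int (a i - b i) *\<^sub>R (rvec \<circ> v) i) = rvec (lincomb v (\<lambda>i. a i - b i))"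
    by (simp add: rvec_lincomb)
  also have "\<dots> = 0"
    by (simp add: lincomb_diff eq rvec_def vec_eq_iff)
  finally have "real_of_int (a i - b i) = 0"
    using indep by (intro independent_image_coeff_eq_0[OF _ inj' _ _ i]) (simp_all add: image_comp)
  then show ?thesis by simp
qed

lemma mem_Ajh_iff:
  fixes v :: "nat \<Rightarrow> int ^ 'd"
  shows "x \<in> Ajh v j h \<longleftrightarrow> (\<exists>e. (\<forall>i\<in>{1..CARD('d)}. 0 \<le> e i)
           \<and> (\<Sum>i\<in>{1..CARD('d)}. e i) \<le> int h - int j \<and> x = zsc (int j) (v 0) + lincomb v e)"
proof
  assume "x \<in> Ajh v j h"
  then obtain n :: "nat \<Rightarrow> nat" where "int (\<Sum>i\<in>{1..CARD('d)}. n i) \<le> int h - int j"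
      and "x = zsc (int j) (v 0) + lincomb v (\<lambda>i. int (n i))"
    unfolding Ajh_def Cset_def lincomb_def by blast
  then show "\<exists>e. (\<forall>i\<in>{1..CARD('d)}. 0 \<le> e i)
           \<and> (\<Sum>i\<in>{1..CARD('d)}. e i) \<le> int h - int j \<and> x = zsc (int j) (v 0) + lincomb v e"
    by (intro exI[of _ "\<lambda>i. int (n i)"]) simp
next
  assume "\<exists>e. (\<forall>i\<in>{1..CARD('d)}. 0 \<le> e i)
           \<and> (\<Sum>i\<in>{1..CARD('d)}. e i) \<le> int h - int j \<and> x = zsc (int j) (v 0) + lincomb v e"
  then obtain e where nonneg: "\<forall>i\<in>{1..CARD('d)}. 0 \<le> e i"
      and "(\<Sum>i\<in>{1..CARD('d)}. e i) \<le> int h - int j" and "x = zsc (int j) (v 0) + lincomb v e"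
    by blast
  moreover have "lincomb v e \<in> Cset v (int h - int j)"
  proof -
    have "lincomb v e = (\<Sum>i\<in>{1..CARD('d)}. zsc (int (nat (e i))) (v i))"
      using nonneg by (simp add: lincomb_def)
    moreover have "int (\<Sum>i\<in>{1..CARD('d)}. nat (e i)) \<le> int h - int j"
      using nonneg \<open>(\<Sum>i\<in>{1..CARD('d)}. e i) \<le> int h - int j\<close> by simp
    ultimately show ?thesis
      unfolding Cset_def by (intro CollectI exI[of _ "\<lambda>i. nat (e i)"] conjI)
  qed
  ultimately show "x \<in> Ajh v j h"
    unfolding Ajh_def by blast
qed

lemma zsc_diff_eq_lincomb_diff:
  assumes "x = zsc m (v 0) + lincomb v a" and "x = zsc M (v 0) + lincomb v b"
  shows "zsc (M - m) (v 0) = lincomb v (\<lambda>i. a i - b i)"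
  using assms by (simp add: lincomb_diff zsc_diff algebra_simps)

lemma convex_combination_nonneg_sum_le:
  fixes a b e :: "'i \<Rightarrow> int" and s t :: int
  assumes "0 \<le> s" and "0 \<le> t" and "0 < s + t"
    and comb: "\<And>i. i \<in> K \<Longrightarrow> (s + t) * e i = s * a i + t * b i"
    and "\<forall>i\<in>K. 0 \<le> a i" and "\<forall>i\<in>K. 0 \<le> b i"
    and "sum a K \<le> A" and "sum b K \<le> B"
  shows "\<forall>i\<in>K. 0 \<le> e i" and "(s + t) * sum e K \<le> s * A + t * B"
proof -
  show "\<forall>i\<in>K. 0 \<le> e i"
  proof
    fix i assume "i \<in> K"
    then have "0 \<le> (s + t) * e i"
      using comb assms(1,2,5,6) by simp
    then show "0 \<le> e i"
      using \<open>0 < s + t\<close> by (simp add: zero_le_mult_iff)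
  qed
  have "(s + t) * sum e K = s * sum a K + t * sum b K"
    by (simp add: sum_distrib_left sum.distrib comb mult.assoc[symmetric] cong: sum.cong)
  also have "\<dots> \<le> s * A + t * B"
    using assms by (intro add_mono mult_left_mono) auto
  finally show "(s + t) * sum e K \<le> s * A + t * B" .
qed

lemma Ajh_Int_subset_Ajh_progression:
  fixes v :: "nat \<Rightarrow> int ^ 'd"
  assumes indep: "independent (rvec ` v ` {1..CARD('d)})" and inj: "inj_on v {1..CARD('d)}"
    and period: "zsc (int N) (v 0) = lincomb v c"
    and j: "j = m + N * k" and M: "M = j + N * l"
  shows "Ajh v m h \<inter> Ajh v M h \<subseteq> Ajh v j h"
proof
  fix x assume x: "x \<in> Ajh v m h \<inter> Ajh v M h"
  show "x \<in> Ajh v j h"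
  proof (cases "k = 0")
    case True
    with j x show ?thesis by simp
  next
    case False
    obtain a where a_nonneg: "\<forall>i\<in>{1..CARD('d)}. 0 \<le> a i"
      and a_sum: "(\<Sum>i\<in>{1..CARD('d)}. a i) \<le> int h - int m" and a: "x = zsc (int m) (v 0) + lincomb v a"
      using x mem_Ajh_iff[of x v m h] by blast
    obtain b where b_nonneg: "\<forall>i\<in>{1..CARD('d)}. 0 \<le> b i"
      and b_sum: "(\<Sum>i\<in>{1..CARD('d)}. b i) \<le> int h - int M" and b: "x = zsc (int M) (v 0) + lincomb v b"
      using x mem_Ajh_iff[of x v M h] by blast
    have "lincomb v (\<lambda>i. a i - b i) = zsc (int M - int m) (v 0)"
      using zsc_diff_eq_lincomb_diff[OF a b] by simp
    also have "\<dots> = zsc (int (k + l)) (zsc (int N) (v 0))"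
      using j M by (simp add: zsc_zsc algebra_simps)
    also have "\<dots> = lincomb v (\<lambda>i. int (k + l) * c i)"
      by (simp add: period lincomb_scale)
    finally have coeff: "a i - b i = int (k + l) * c i" if "i \<in> {1..CARD('d)}" for i
      by (rule lincomb_coeffs_unique[OF indep inj _ that])
    define e where "e i = a i - int k * c i" for i
    have "(int l + int k) * e i = int l * a i + int k * b i" if "i \<in> {1..CARD('d)}" for i
      using coeff[OF that] by (simp add: e_def algebra_simps)
    from convex_combination_nonneg_sum_le[OF _ _ _ this a_nonneg b_nonneg a_sum b_sum]
    have e_nonneg: "\<forall>i\<in>{1..CARD('d)}. 0 \<le> e i"
      and "(int l + int k) * (\<Sum>i\<in>{1..CARD('d)}. e i) \<le> (int l + int k) * (int h - int j)"
      using False j M by (simp_all add: algebra_simps)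
    then have e_sum: "(\<Sum>i\<in>{1..CARD('d)}. e i) \<le> int h - int j"
      using False by simp
    have "lincomb v e = lincomb v a - zsc (int k) (zsc (int N) (v 0))"
      unfolding e_def period by (simp add: lincomb_diff lincomb_scale)
    moreover have "zsc (int j) (v 0) = zsc (int m) (v 0) + zsc (int k) (zsc (int N) (v 0))"
      using j by (simp add: zsc_add zsc_zsc mult.commute)
    ultimately have "x = zsc (int j) (v 0) + lincomb v e"
      using a by simp
    with e_nonneg e_sum show ?thesis
      using mem_Ajh_iff by blast
  qed
qed

lemma Ajh_meet_imp_zsc_diff_in_lat:
  fixes v :: "nat \<Rightarrow> int ^ 'd"
  assumes "x \<in> Ajh v m h" and "x \<in> Ajh v M h" and "m \<le> M"
  shows "zsc (int (M - m)) (v 0) \<in> lat v"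
proof -
  obtain a b where "x = zsc (int m) (v 0) + lincomb v a" and "x = zsc (int M) (v 0) + lincomb v b"
    using assms(1,2) mem_Ajh_iff by metis
  from zsc_diff_eq_lincomb_diff[OF this] show ?thesis
    using \<open>m \<le> M\<close> by (simp add: lat_eq_range_lincomb of_nat_diff)
qed

lemma ordN_mult_in_lat:
  assumes "0 < n" and "zsc (int n) (v 0) \<in> lat v"
  shows "zsc (int (ordN v)) (v 0) \<in> lat v"
  using LeastI[of "\<lambda>N. 0 < N \<and> zsc (int N) (v 0) \<in> lat v" n] assms unfolding ordN_def by auto

lemma Ajh_Int_subset_Ajh:
  fixes v :: "nat \<Rightarrow> int ^ 'd"
  assumes indep: "independent (rvec ` v ` {1..CARD('d)})" and inj: "inj_on v {1..CARD('d)}"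
    and "m \<le> j" and "j \<le> M"
    and "j mod ordN v = m mod ordN v" and "M mod ordN v = j mod ordN v"
  shows "Ajh v m h \<inter> Ajh v M h \<subseteq> Ajh v j h"
proof
  fix x assume x: "x \<in> Ajh v m h \<inter> Ajh v M h"
  show "x \<in> Ajh v j h"
  proof (cases "m = M")
    case True
    with x assms(3,4) show ?thesis by auto
  next
    case False
    with x assms(3,4) have "zsc (int (ordN v)) (v 0) \<in> lat v"
      by (intro ordN_mult_in_lat[of "M - m"] Ajh_meet_imp_zsc_diff_in_lat[of x]) auto
    then obtain c where period: "zsc (int (ordN v)) (v 0) = lincomb v c"
      by (auto simp: lat_eq_range_lincomb)
    obtain k where "j = m + ordN v * k"
      using mod_eq_nat1E[OF assms(5,3)] .
    moreover obtain l where "M = j + ordN v * l"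
      using mod_eq_nat1E[OF assms(6,4)] .
    ultimately show ?thesis
      using Ajh_Int_subset_Ajh_progression[OF indep inj period] x by blast
  qed
qed

theorem lemma6p1:
  fixes A :: "(int ^ 'd) set" and v :: "nat \<Rightarrow> int ^ 'd"
    and h :: nat and I :: "nat set"
  assumes "finite A" and "card A = CARD('d) + 2" and "0 \<in> A"
    and "generates_Zd A"
    and "A - {0} = v ` {0..CARD('d)}"
    and "inj_on v {0..CARD('d)}"
    and "independent (rvec ` v ` {1..CARD('d)})"
    and "I \<subseteq> {0..h}" and "I \<noteq> {}"
    and "\<forall>i\<in>I. \<forall>j\<in>I. i mod ordN v = j mod ordN v"
  shows "(\<Inter>j\<in>I. Ajh v j h) = Ajh v (Min I) h \<inter> Ajh v (Max I) h"
proof -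
  have "finite I"
    using assms(8) finite_subset by blast
  then have extremes: "Min I \<in> I" "Max I \<in> I"
    using assms(9) by auto
  have inj: "inj_on v {1..CARD('d)}"
    using assms(6) by (rule inj_on_subset) auto
  have "Ajh v (Min I) h \<inter> Ajh v (Max I) h \<subseteq> Ajh v j h" if "j \<in> I" for j
  proof (rule Ajh_Int_subset_Ajh[OF assms(7) inj])
    show "Min I \<le> j" and "j \<le> Max I"
      using \<open>finite I\<close> \<open>j \<in> I\<close> by simp_all
    show "j mod ordN v = Min I mod ordN v" and "Max I mod ordN v = j mod ordN v"
      using assms(10) extremes \<open>j \<in> I\<close> by blast+
  qed
  with extremes show ?thesis
    by blast
qed

end
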